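(* Let $\gamma_1,\dots,\gamma_T$ be real numbers with $0<\gamma_k<1$ for all $1\le k\le T$, and let $\gamma_{max}^k=\max\{\gamma_1,\dots,\gamma_k\}$. Let $\alpha>0$, $0<\beta<1/\gamma_{max}^T$ and $i\in\{1,2,\dots\}$. Define $$\Psi(k)=\left[(1-\gamma_{max}^k\beta)^{k-1}+\dots+(1-\gamma_{max}^k\beta)+1\right](\gamma_{max}^k)^i\alpha.$$ Then for every $k$ with $1\le k\le T-1$, $$(1-\gamma_{k+1}\beta)\Psi(k)+(\gamma_{k+1})^i\alpha\le\Psi(k+1).$$ *)

theory Defs
  imports Complex_Main
begin

definition gmax :: "(nat \<Rightarrow> real) \<Rightarrow> nat \<Rightarrow> real" where
  "gmax gamma k = Max (gamma ` {1..k})"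

definition Psi :: "(nat \<Rightarrow> real) \<Rightarrow> real \<Rightarrow> real \<Rightarrow> nat \<Rightarrow> nat \<Rightarrow> real" where
  "Psi gamma alpha beta i k =
     (\<Sum>j<k. (1 - gmax gamma k * beta) ^ j) * (gmax gamma k) ^ i * alpha"

end

theory Submission
  imports Defs
begin

text \<open>Write \<open>g = \<gamma>\<^sub>m\<^sub>a\<^sub>x\<^sup>k\<close>, \<open>y = \<gamma>\<^sub>m\<^sub>a\<^sub>x\<^sup>k\<^sup>+\<^sup>1 = max g c\<close> with \<open>c = \<gamma>\<^sub>k\<^sub>+\<^sub>1\<close>, and
  \<open>w(x) = (\<Sum>j<k. (1 - x\<beta>)^j) x^i\<close>, so that \<open>\<Psi>(k) = w(g) \<alpha>\<close> and
  \<open>\<Psi>(k+1) = ((1 - y\<beta>) w(y) + y^i) \<alpha>\<close>. Summing the geometric series gives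
  \<open>\<beta> w(x) = x^(i-1) (1 - (1 - x\<beta>)^k)\<close>, which is nondecreasing for \<open>0 \<le> x \<le> 1/\<beta>\<close>;
  as \<open>g \<le> y\<close>, this lets us replace \<open>w(g)\<close> by \<open>w(y)\<close>. Replacing then \<open>c\<close> by \<open>y\<close> costs
  \<open>(y - c) \<beta> w(y) \<le> (y - c) y^(i-1)\<close> and gains \<open>y^i - c^i \<ge> (y - c) y^(i-1)\<close>.\<close>

lemma gmax_upper: "j \<in> {1..k} \<Longrightarrow> gamma j \<le> gmax gamma k"
  unfolding gmax_def by auto

lemma gmax_attained: "1 \<le> k \<Longrightarrow> \<exists>j\<in>{1..k}. gmax gamma k = gamma j"
proof -
  assume "1 \<le> k"
  then have "gmax gamma k \<in> gamma ` {1..k}" unfolding gmax_def by (intro Max_in) auto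
  then show ?thesis by blast
qed

lemma gmax_pos: "1 \<le> k \<Longrightarrow> (\<And>j. j \<in> {1..k} \<Longrightarrow> 0 < gamma j) \<Longrightarrow> 0 < gmax gamma k"
  using gmax_attained[of k gamma] by auto

lemma gmax_mono: "1 \<le> k \<Longrightarrow> k \<le> n \<Longrightarrow> gmax gamma k \<le> gmax gamma n"
  unfolding gmax_def by (intro Max_mono image_mono) auto

lemma gmax_Suc: "1 \<le> k \<Longrightarrow> gmax gamma (Suc k) = max (gamma (Suc k)) (gmax gamma k)"
proof -
  assume "1 \<le> k"
  have "{1..Suc k} = insert (Suc k) {1..k}" by auto
  with \<open>1 \<le> k\<close> show ?thesis unfolding gmax_def by simp
qed

lemma Psi_Suc:
  "Psi gamma alpha beta i (Suc k) =
     ((1 - y * beta) * ((\<Sum>j<k. (1 - y * beta) ^ j) * y ^ i) + y ^ i) * alpha"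
  if "y = gmax gamma (Suc k)"
proof -
  have "(\<Sum>j<Suc k. (1 - y * beta) ^ j) = (1 - y * beta) * (\<Sum>j<k. (1 - y * beta) ^ j) + 1"
    by (simp add: sum.lessThan_Suc_shift sum_distrib_left del: sum.lessThan_Suc)
  then show ?thesis
    unfolding Psi_def that[symmetric] by (simp only: distrib_right mult.assoc mult_1_left)
qed

lemma geometric_sum_one_minus:
  fixes x b :: real
  shows "b * x * (\<Sum>j<k. (1 - x * b) ^ j) = 1 - (1 - x * b) ^ k"
  using one_diff_power_eq[of "1 - x * b" k] by (simp add: mult.commute)

lemma geometric_weight_closed_form:
  fixes x b :: real
  shows "b * ((\<Sum>j<k. (1 - x * b) ^ j) * x ^ Suc m) = x ^ m * (1 - (1 - x * b) ^ k)"
proof -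
  have "b * ((\<Sum>j<k. (1 - x * b) ^ j) * x ^ Suc m) = x ^ m * (b * x * (\<Sum>j<k. (1 - x * b) ^ j))"
    by (simp add: algebra_simps)
  then show ?thesis by (simp only: geometric_sum_one_minus)
qed

lemma geometric_weight_mono:
  fixes x y b :: real
  assumes "0 \<le> x" "x \<le> y" "0 < b" "y * b \<le> 1" "1 \<le> i"
  shows "(\<Sum>j<k. (1 - x * b) ^ j) * x ^ i \<le> (\<Sum>j<k. (1 - y * b) ^ j) * y ^ i"
proof -
  obtain m where i: "i = Suc m" using \<open>1 \<le> i\<close> by (cases i) auto
  have "x * b \<le> y * b" using assms by (simp add: mult_right_mono)
  then have "1 - y * b \<le> 1 - x * b" "0 \<le> 1 - y * b" "1 - x * b \<le> 1"
    using assms by auto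
  then have "(1 - y * b) ^ k \<le> (1 - x * b) ^ k" "(1 - x * b) ^ k \<le> 1"
    by (auto intro: power_mono power_le_one)
  moreover have "x ^ m \<le> y ^ m"
    using assms by (intro power_mono) auto
  ultimately have "x ^ m * (1 - (1 - x * b) ^ k) \<le> y ^ m * (1 - (1 - y * b) ^ k)"
    using assms by (intro mult_mono) auto
  then have "b * ((\<Sum>j<k. (1 - x * b) ^ j) * x ^ i) \<le> b * ((\<Sum>j<k. (1 - y * b) ^ j) * y ^ i)"
    unfolding i geometric_weight_closed_form .
  with \<open>0 < b\<close> show ?thesis by simp
qed

lemma geometric_weight_step_mono:
  fixes c y b :: real and i k :: nat
  defines "w \<equiv> (\<Sum>j<k. (1 - y * b) ^ j) * y ^ i"
  assumes "0 \<le> c" "c \<le> y" "y * b \<le> 1" "1 \<le> i"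
  shows "(1 - c * b) * w + c ^ i \<le> (1 - y * b) * w + y ^ i"
proof -
  obtain m where i: "i = Suc m" using \<open>1 \<le> i\<close> by (cases i) auto
  have "b * w = y ^ m * (1 - (1 - y * b) ^ k)"
    unfolding w_def i by (rule geometric_weight_closed_form)
  also have "\<dots> \<le> y ^ m"
    using assms by (simp add: mult_left_le)
  finally have "(y - c) * (b * w) \<le> (y - c) * y ^ m"
    using \<open>c \<le> y\<close> by (intro mult_left_mono) auto
  also have "\<dots> \<le> y ^ i - c ^ i"
  proof -
    have "c ^ m \<le> y ^ m" using assms by (intro power_mono) auto
    then have "c * c ^ m \<le> c * y ^ m" using \<open>0 \<le> c\<close> by (rule mult_left_mono)
    then show ?thesis by (simp add: i algebra_simps)
  qed
  finally show ?thesis by (simp add: algebra_simps)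
qed

theorem lemma13:
  fixes gamma :: "nat \<Rightarrow> real" and alpha beta :: real and i T k :: nat
  assumes gamma_range: "\<And>j. 1 \<le> j \<Longrightarrow> j \<le> T \<Longrightarrow> 0 < gamma j \<and> gamma j < 1"
    and alpha_pos: "alpha > 0"
    and beta_pos: "0 < beta" and beta_bound: "beta < 1 / gmax gamma T"
    and i_pos: "i \<ge> 1"
    and k_range: "1 \<le> k" "k \<le> T - 1"
  shows "(1 - gamma (k + 1) * beta) * Psi gamma alpha beta i k + (gamma (k + 1)) ^ i * alpha
           \<le> Psi gamma alpha beta i (k + 1)"
proof -
  define g c y where "g = gmax gamma k" and "c = gamma (Suc k)" and "y = gmax gamma (Suc k)"
  define w where "w x = (\<Sum>j<k. (1 - x * beta) ^ j) * x ^ i" for x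
  have kT: "Suc k \<le> T" using k_range by simp
  have c: "0 \<le> c" "c \<le> y"
    using gamma_range[OF _ kT] gmax_upper[of "Suc k" "Suc k" gamma] by (auto simp: c_def y_def)
  have g: "0 \<le> g" "g \<le> y"
    using gmax_pos[OF k_range(1), of gamma] gamma_range kT
    by (auto simp: g_def y_def gmax_Suc[OF k_range(1)])
  have "0 < gmax gamma T" using gmax_pos[of T gamma] gamma_range kT by simp
  with beta_bound have "gmax gamma T * beta < 1" by (simp add: less_divide_eq mult.commute)
  moreover have "y * beta \<le> gmax gamma T * beta"
    using gmax_mono[OF _ kT, of gamma] beta_pos by (simp add: y_def)
  ultimately have y: "y * beta \<le> 1" by simp
  have "c * beta \<le> y * beta" using c(2) beta_pos by simp
  with y have "c * beta \<le> 1" by linarith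
  have "(1 - gamma (k + 1) * beta) * Psi gamma alpha beta i k + (gamma (k + 1)) ^ i * alpha
          = ((1 - c * beta) * w g + c ^ i) * alpha"
    by (simp add: Psi_def w_def g_def c_def algebra_simps)
  also have "\<dots> \<le> ((1 - c * beta) * w y + c ^ i) * alpha"
    using geometric_weight_mono[OF g beta_pos y i_pos] \<open>c * beta \<le> 1\<close> alpha_pos
    by (intro mult_right_mono add_right_mono mult_left_mono) (auto simp: w_def)
  also have "\<dots> \<le> ((1 - y * beta) * w y + y ^ i) * alpha"
    using geometric_weight_step_mono[OF c y i_pos] alpha_pos by (simp add: w_def)
  also have "\<dots> = Psi gamma alpha beta i (k + 1)"
    using Psi_Suc[OF y_def] by (simp add: w_def)
  finally show ?thesis .
qed

end
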